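(* Let $f(q):=\sum_{n=0}^{\infty}\frac{q^{n^2}}{(-q;q)_n^2}$. Then the series defining $f(q)$ converges for every $q\in\mathbb{C}$ with $|q|\neq 1$. Moreover, if $0<|q|<1$ and $\chi(q):=(-q;q)_\infty$, then $$f(q)=\sum_{n=0}^{\infty}\frac{q^{n^2}}{(-q;q)_n^2},\qquad f(1/q)=\sum_{n=0}^{\infty}\frac{q^{n}}{(-q;q)_n^2},$$ $$f(q)=\chi(q)^{-2}\sum_{n=0}^{\infty}\left(-q^{n+1};q\right)_\infty^2q^{n^2},\qquad f(1/q)=\chi(q)^{-2}\sum_{n=0}^{\infty}\left(-q^{n+1};q\right)_\infty^2q^{n},$$ $$f(q)=\chi(q)^{-2}\sum_{n=0}^{\infty}q^{n^2}\exp\left[-2\sum_{s=1}^{\infty}\frac{q^s}{s}\sum_{d\mid s,\ d\geq n+1}(-1)^{s/d}d\right],$$ $$f(q)\chi(q)^2=\sum_{n=0}^{\infty}q^{n^2}\exp\left[-2\sum_{s=1}^{\infty}q^s\sum_{0<d\mid s,\ d\leq s/(n+1)}\frac{(-1)^d}{d}\right],$$ $$f(1/q)\chi(q)^2=\sum_{n=0}^{\infty}q^{n}\exp\left[-2\sum_{s=1}^{\infty}q^s\sum_{0<d\mid s,\ d\leq s/(n+1)}\frac{(-1)^d}{d}\right].$$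
   Context: The $q$-Pochhammer symbol is $(a;q)_n:=\prod_{j=1}^{n}(1-aq^{j-1})$ for $n\geq1$, $(a;q)_0:=1$, and $(a;q)_\infty:=\prod_{j=1}^\infty(1-aq^{j-1})$ for $|q|<1$. Divisors $d$ in the inner sums are positive integers. *)

theory Defs
  imports "HOL-Analysis.Analysis"
begin

definition qpoch :: "complex \<Rightarrow> complex \<Rightarrow> nat \<Rightarrow> complex" where
  "qpoch a q n = (\<Prod>j<n. 1 - a * q ^ j)"

definition qpoch_inf :: "complex \<Rightarrow> complex \<Rightarrow> complex" where
  "qpoch_inf a q = (\<Prod>j. 1 - a * q ^ j)"

definition f_term :: "complex \<Rightarrow> nat \<Rightarrow> complex" where
  "f_term q n = q ^ (n\<^sup>2) / (qpoch (- q) q n)\<^sup>2"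

definition f :: "complex \<Rightarrow> complex" where
  "f q = (\<Sum>n. f_term q n)"

definition chi :: "complex \<Rightarrow> complex" where
  "chi q = qpoch_inf (- q) q"

end

theory Submission
  imports Defs
begin

(* Every factor of the tail (-q^(n+1);q)_oo is 1 + q^d with d > n. Expanding
   Ln (1 + q^d) = sum_k (-1)^(k+1) q^(dk) / k and collecting the terms with dk = s, which is
   legitimate because the double series converges absolutely for |q| < 1, expresses the
   logarithm of the tail as the divisor series in the exponent; the substitution d -> s/d gives
   its second form. Splitting chi(q) = (-q;q)_n (-q^(n+1);q)_oo turns the n-th summand of f(q)
   into chi(q)^(-2) times the squared tail. Finally (-1/q;1/q)_n^2 = q^(-n(n+1)) (-q;q)_n^2
   turns f(1/q) into sum_n q^n / (-q;q)_n^2, and the ratio test gives convergence for |q| < 1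
   and, through this identity, for |q| > 1. *)

lemma qpoch_minus_Suc: "qpoch (- q) q (Suc n) = qpoch (- q) q n * (1 + q ^ Suc n)"
  by (simp add: qpoch_def)

lemma one_plus_power_nonzero:
  fixes q :: complex
  assumes "norm q \<noteq> 1"
  shows "1 + q ^ Suc n \<noteq> 0"
proof
  assume "1 + q ^ Suc n = 0"
  then have "norm (q ^ Suc n) = 1" by (simp add: add_eq_0_iff)
  then have "norm q ^ Suc n = 1" by (simp only: norm_power)
  with assms power_eq_1_iff [of "norm q" "Suc n"] show False by simp
qed

lemma qpoch_minus_nonzero:
  fixes q :: complex
  assumes "norm q \<noteq> 1"
  shows "qpoch (- q) q n \<noteq> 0"
  using one_plus_power_nonzero [OF assms] by (simp add: qpoch_def)

lemma qpoch_inverse_sq: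
  fixes q :: complex
  assumes "q \<noteq> 0"
  shows "(qpoch (- (1 / q)) (1 / q) n)\<^sup>2 * q ^ (n * n + n) = (qpoch (- q) q n)\<^sup>2"
proof (induction n)
  case 0
  then show ?case by (simp add: qpoch_def)
next
  case (Suc n)
  have factor: "(1 + (1 / q) ^ Suc n) * q ^ Suc n = 1 + q ^ Suc n"
    using assms by (simp add: power_one_over field_simps del: power_Suc)
  have exponent: "Suc n * Suc n + Suc n = (n * n + n) + Suc n * 2" by simp
  have "(qpoch (- (1 / q)) (1 / q) (Suc n))\<^sup>2 * q ^ (Suc n * Suc n + Suc n)
      = (qpoch (- (1 / q)) (1 / q) n)\<^sup>2 * q ^ (n * n + n) * ((1 + (1 / q) ^ Suc n) * q ^ Suc n)\<^sup>2"
    unfolding qpoch_minus_Suc exponent power_add power_mult by (simp only: power_mult_distrib mult_ac)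
  also have "\<dots> = (qpoch (- q) q (Suc n))\<^sup>2"
    by (simp only: Suc.IH factor qpoch_minus_Suc power_mult_distrib)
  finally show ?case .
qed

lemma f_term_inverse:
  fixes q :: complex
  assumes "q \<noteq> 0" "norm q \<noteq> 1"
  shows "f_term (1 / q) n = q ^ n / (qpoch (- q) q n)\<^sup>2"
proof -
  have "(qpoch (- (1 / q)) (1 / q) n)\<^sup>2 = (qpoch (- q) q n)\<^sup>2 / q ^ (n * n + n)"
    using qpoch_inverse_sq [OF assms(1), of n] assms(1) by (simp add: eq_divide_eq)
  moreover have "(1 / q) ^ (n * n) * q ^ (n * n + n) = q ^ n"
    using assms(1) by (simp add: power_add power_one_over)
  ultimately show ?thesis
    by (simp add: f_term_def power2_eq_square [of n])
qed

lemma f_inverse_eq: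
  fixes q :: complex
  assumes "q \<noteq> 0" and "norm q \<noteq> 1"
  shows "f (1 / q) = (\<Sum>n. q ^ n / (qpoch (- q) q n)\<^sup>2)"
  using f_term_inverse [OF assms] by (simp add: f_def)

lemma summable_ratio_test_tendsto:
  fixes a :: "nat \<Rightarrow> 'a::banach"
  assumes "\<And>n. norm (a (Suc n)) \<le> \<rho> n * norm (a n)" and "\<rho> \<longlonglongrightarrow> L" and "L < 1"
  shows "summable a"
proof -
  obtain N where N: "\<And>n. n \<ge> N \<Longrightarrow> \<rho> n < (1 + L) / 2"
    using order_tendstoD(2) [OF assms(2), of "(1 + L) / 2"] assms(3)
    by (auto simp: eventually_sequentially)
  show ?thesis
  proof (rule summable_ratio_test)
    show "(1 + L) / 2 < 1" using assms(3) by simp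
    fix n assume "n \<ge> N"
    then have "\<rho> n * norm (a n) \<le> (1 + L) / 2 * norm (a n)"
      using N by (intro mult_right_mono) (auto intro: less_imp_le)
    then show "norm (a (Suc n)) \<le> (1 + L) / 2 * norm (a n)"
      using assms(1) [of n] by linarith
  qed
qed

lemma summable_norm_power_div_qpoch_sq:
  fixes q :: complex
  assumes "norm q < 1"
  shows "summable (\<lambda>n. norm (q ^ n / (qpoch (- q) q n)\<^sup>2))"
proof (rule summable_ratio_test_tendsto)
  fix n
  show "norm (norm (q ^ Suc n / (qpoch (- q) q (Suc n))\<^sup>2))
      \<le> norm (q / (1 + q ^ Suc n)\<^sup>2) * norm (norm (q ^ n / (qpoch (- q) q n)\<^sup>2))"
    by (simp add: qpoch_minus_Suc norm_mult norm_divide norm_power power_mult_distrib mult_ac)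
next
  have "(\<lambda>n. q ^ Suc n) \<longlonglongrightarrow> 0"
    using LIMSEQ_power_zero [OF assms] by (rule LIMSEQ_Suc)
  then show "(\<lambda>n. norm (q / (1 + q ^ Suc n)\<^sup>2)) \<longlonglongrightarrow> norm (q / (1 + 0)\<^sup>2)"
    by (intro tendsto_intros) simp_all
qed (use assms in simp)

lemma summable_f_term:
  fixes q :: complex
  assumes "norm q \<noteq> 1"
  shows "summable (f_term q)"
proof (cases "norm q < 1")
  case True
  show ?thesis
  proof (rule summable_comparison_test')
    show "summable (\<lambda>n. norm (q ^ n / (qpoch (- q) q n)\<^sup>2))"
      using True by (rule summable_norm_power_div_qpoch_sq)
    fix n
    have "norm q ^ n\<^sup>2 \<le> norm q ^ n"
      using True by (intro power_decreasing) (auto simp: power2_eq_square)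
    then show "norm (f_term q n) \<le> norm (q ^ n / (qpoch (- q) q n)\<^sup>2)"
      by (simp add: f_term_def norm_divide norm_power divide_right_mono)
  qed
next
  case False
  with assms have "norm q > 1" by simp
  then have "norm (1 / q) < 1" "1 / q \<noteq> 0"
    by (auto simp: norm_divide divide_less_eq)
  then have "f_term q = (\<lambda>n. (1 / q) ^ n / (qpoch (- (1 / q)) (1 / q) n)\<^sup>2)"
    using f_term_inverse [of "1 / q"] by auto
  with summable_norm_power_div_qpoch_sq [OF \<open>norm (1 / q) < 1\<close>] show ?thesis
    by (simp add: summable_norm_cancel)
qed

lemma convergent_prod_qpoch_inf:
  fixes a q :: complex
  assumes "norm q < 1"
  shows "convergent_prod (\<lambda>j. 1 - a * q ^ j)"
proof (rule abs_convergent_prod_imp_convergent_prod, rule summable_imp_abs_convergent_prod)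
  show "summable (\<lambda>j. norm (1 - a * q ^ j - 1))"
    using assms by (simp add: norm_mult norm_power summable_mult summable_geometric)
qed

lemma qpoch_inf_split:
  fixes a q :: complex
  assumes "norm q < 1" and "qpoch a q n \<noteq> 0"
  shows "qpoch_inf a q = qpoch a q n * qpoch_inf (a * q ^ n) q"
proof -
  have "\<And>j. j < n \<Longrightarrow> 1 - a * q ^ j \<noteq> 0"
    using assms(2) by (simp add: qpoch_def)
  then have "qpoch_inf a q = (\<Prod>j. 1 - a * q ^ (j + n)) * qpoch a q n"
    unfolding qpoch_inf_def qpoch_def
    by (rule prodinf_split_initial_segment [OF convergent_prod_qpoch_inf [OF assms(1)]])
  then show ?thesis
    by (simp add: qpoch_inf_def power_add mult_ac)
qed

lemma chi_eq_qpoch_mult_tail: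
  fixes q :: complex
  assumes "norm q < 1"
  shows "chi q = qpoch (- q) q n * qpoch_inf (- (q ^ (n + 1))) q"
proof -
  have "qpoch (- q) q n \<noteq> 0"
    using assms by (intro qpoch_minus_nonzero) simp
  then show ?thesis
    unfolding chi_def using qpoch_inf_split [OF assms] by simp
qed

lemma chi_nonzero:
  fixes q :: complex
  assumes "norm q < 1"
  shows "chi q \<noteq> 0"
proof -
  have "1 - - q * q ^ j \<noteq> 0" for j
    using one_plus_power_nonzero [of q j] assms by simp
  then show ?thesis
    unfolding chi_def qpoch_inf_def
    by (rule prodinf_nonzero [OF convergent_prod_qpoch_inf [OF assms]])
qed

lemma Ln_one_plus_has_sum:
  fixes z :: complex
  assumes "norm z < 1"
  shows "((\<lambda>k. (-1) ^ Suc k / of_nat k * z ^ k) has_sum Ln (1 + z)) {1..}"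
proof -
  have "summable (\<lambda>k. norm ((-1) ^ Suc k / of_nat k * z ^ k))"
  proof (rule summable_comparison_test')
    show "summable (\<lambda>k. norm z ^ k)"
      using assms by (simp add: summable_geometric)
    show "norm (norm ((-1) ^ Suc k / of_nat k * z ^ k)) \<le> norm z ^ k" for k :: nat
      by (cases "k = 0") (simp_all add: norm_mult norm_divide norm_power divide_le_eq mult_le_cancel_left1)
  qed
  then have "((\<lambda>k. (-1) ^ Suc k / of_nat k * z ^ k) has_sum Ln (1 + z)) UNIV"
    using Ln_series [OF assms] by (rule norm_summable_imp_has_sum)
  then show ?thesis
    by (rule has_sum_cong_neutral [THEN iffD1, rotated -1]) auto
qed

lemma summable_on_Ln_power_family:
  fixes q :: complex
  assumes "norm q < 1"
  shows "(\<lambda>(d, k). (-1) ^ Suc k / of_nat k * q ^ (d * k)) summable_on {Suc m..} \<times> {1..}"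
proof -
  define r where "r = norm q"
  have r: "0 \<le> r" "r < 1" using assms by (auto simp: r_def)
  have "(\<lambda>(d, k). r ^ (d - 1) * r ^ k) summable_on {Suc m..} \<times> {1::nat..}"
  proof (rule summable_on_SigmaI)
    show "((\<lambda>k. (\<lambda>(d, k). r ^ (d - 1) * r ^ k) (d, k)) has_sum (r ^ (d - 1) * (r / (1 - r)))) {1..}"
      for d :: nat
      using has_sum_cmult_right [OF has_sum_geometric_from_1 [of r], of "r ^ (d - 1)"] r by simp
    have "summable (\<lambda>d. r ^ (d - 1) * (r / (1 - r)))"
      using summable_Suc_iff [of "\<lambda>d. r ^ (d - 1)"] r by (simp add: summable_geometric summable_mult2)
    then have "(\<lambda>d. r ^ (d - 1) * (r / (1 - r))) summable_on UNIV"
      using r by (subst summable_on_UNIV_nonneg_real_iff) auto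
    then show "(\<lambda>d. r ^ (d - 1) * (r / (1 - r))) summable_on {Suc m..}"
      by (rule summable_on_subset) auto
  qed (use r in auto)
  moreover have "norm ((-1) ^ Suc k / of_nat k * q ^ (d * k)) \<le> r ^ (d - 1) * r ^ k"
    if "d \<ge> 1" "k \<ge> 1" for d k :: nat
  proof -
    have "norm ((-1) ^ Suc k / of_nat k * q ^ (d * k)) \<le> r ^ (d * k)"
      using that by (simp add: r_def norm_mult norm_divide norm_power divide_le_eq mult_le_cancel_left1)
    also have "\<dots> \<le> r ^ ((d - 1) + k)"
      using that r by (intro power_decreasing) (auto dest!: Suc_le_D)
    finally show ?thesis by (simp add: power_add)
  qed
  ultimately have "(\<lambda>x. norm ((\<lambda>(d, k). (-1) ^ Suc k / of_nat k * q ^ (d * k)) x))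
      summable_on {Suc m..} \<times> {1..}"
    by (intro Infinite_Sum.abs_summable_on_comparison_test') auto
  then show ?thesis
    by (rule abs_summable_summable)
qed

lemma has_sum_atLeast_imp_sums:
  fixes f :: "nat \<Rightarrow> 'a::{comm_monoid_add, topological_space}"
  assumes "(f has_sum S) {m..}"
  shows "(\<lambda>j. f (m + j)) sums S"
proof -
  have "((\<lambda>j. f (m + j)) has_sum S) UNIV \<longleftrightarrow> (f has_sum S) {m..}"
    by (rule has_sum_reindex_bij_witness [of _ "\<lambda>d. d - m" "\<lambda>j. m + j"]) auto
  with assms show ?thesis by (simp add: has_sum_imp_sums)
qed

lemma has_sum_regroup_by_product:
  fixes g :: "nat \<times> nat \<Rightarrow> 'a::{comm_monoid_add, uniform_space, uniform_topological_group_add}"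
  assumes "(g has_sum T) ({Suc m..} \<times> {1..})"
  shows "((\<lambda>s. \<Sum>d\<in>{d. d dvd s \<and> Suc m \<le> d}. g (d, s div d)) has_sum T) {1..}"
proof -
  have "((\<lambda>(s, d). g (d, s div d)) has_sum T) (SIGMA s:{1..}. {d. d dvd s \<and> Suc m \<le> d})
      \<longleftrightarrow> (g has_sum T) ({Suc m..} \<times> {1..})"
    by (rule has_sum_reindex_bij_witness [of _ "\<lambda>(d, k). (d * k, d)" "\<lambda>(s, d). (d, s div d)"])
      (auto elim!: dvdE)
  then have regrouped:
    "((\<lambda>(s, d). g (d, s div d)) has_sum T) (SIGMA s:{1..}. {d. d dvd s \<and> Suc m \<le> d})"
    using assms by (rule iffD2)
  show ?thesis
  proof (rule has_sum_Sigma' [OF regrouped])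
    fix s :: nat
    assume "s \<in> {1..}"
    then have "finite {d. d dvd s \<and> Suc m \<le> d}"
      by (intro finite_subset [OF _ finite_divisors_nat [of s]]) auto
    then show "((\<lambda>d. (\<lambda>(s, d). g (d, s div d)) (s, d))
        has_sum (\<Sum>d\<in>{d. d dvd s \<and> Suc m \<le> d}. g (d, s div d))) {d. d dvd s \<and> Suc m \<le> d}"
      by (simp add: has_sum_finite)
  qed
qed

lemma Ln_tail_sums_divisor_series:
  fixes q :: complex
  assumes "norm q < 1"
  shows "(\<lambda>j. Ln (1 + q ^ (n + 1 + j))) sums - (\<Sum>s. q ^ Suc s / of_nat (Suc s) *
           (\<Sum>d\<in>{d. d dvd Suc s \<and> n + 1 \<le> d}. (-1) ^ (Suc s div d) * of_nat d))"
proof -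
  define g where "g = (\<lambda>(d, k). (-1) ^ Suc k / of_nat k * q ^ (d * k) :: complex)"
  define T where "T = infsum g ({Suc n..} \<times> {1..})"
  have g: "(g has_sum T) ({Suc n..} \<times> {1..})"
    using summable_on_Ln_power_family [OF assms] by (simp add: T_def g_def)
  have "((\<lambda>d. Ln (1 + q ^ d)) has_sum T) {Suc n..}"
  proof (rule has_sum_Sigma' [OF g])
    fix d :: nat
    assume "d \<in> {Suc n..}"
    then have "norm (q ^ d) < 1"
      using assms by (simp add: norm_power power_less_one_iff)
    then show "((\<lambda>k. g (d, k)) has_sum Ln (1 + q ^ d)) {1..}"
      using Ln_one_plus_has_sum [of "q ^ d"] by (simp add: g_def power_mult)
  qed
  from has_sum_atLeast_imp_sums [OF this]
  have tail: "(\<lambda>j. Ln (1 + q ^ (n + 1 + j))) sums T"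
    by simp
  have regroup_term: "(\<Sum>d\<in>{d. d dvd Suc s \<and> Suc n \<le> d}. g (d, Suc s div d))
      = - (q ^ Suc s / of_nat (Suc s) *
           (\<Sum>d\<in>{d. d dvd Suc s \<and> n + 1 \<le> d}. (-1) ^ (Suc s div d) * of_nat d))" for s
  proof -
    have "g (d, Suc s div d) = - (q ^ Suc s / of_nat (Suc s) * ((-1) ^ (Suc s div d) * of_nat d))"
      if "d dvd Suc s" for d
    proof -
      from that obtain k where k: "Suc s = d * k" ..
      then have "0 < d" "0 < k" by (auto intro: gr0I)
      with k show ?thesis by (simp add: g_def field_simps)
    qed
    then show ?thesis
      by (simp add: sum_distrib_left sum_negf)
  qed
  have "(\<lambda>s. \<Sum>d\<in>{d. d dvd Suc s \<and> Suc n \<le> d}. g (d, Suc s div d)) sums T"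
    using has_sum_atLeast_imp_sums [OF has_sum_regroup_by_product [OF g]] by simp
  then have "(\<lambda>s. - (q ^ Suc s / of_nat (Suc s) *
      (\<Sum>d\<in>{d. d dvd Suc s \<and> n + 1 \<le> d}. (-1) ^ (Suc s div d) * of_nat d))) sums T"
    by (simp only: regroup_term)
  from sums_minus [OF this] tail show ?thesis
    by (simp add: sums_iff)
qed

lemma qpoch_inf_tail_sq_exp:
  fixes q :: complex
  assumes "norm q < 1"
  shows "(qpoch_inf (- (q ^ (n + 1))) q)\<^sup>2 = exp (- 2 * (\<Sum>s. q ^ Suc s / of_nat (Suc s) *
           (\<Sum>d\<in>{d. d dvd Suc s \<and> n + 1 \<le> d}. (-1) ^ (Suc s div d) * of_nat d)))"
    (is "_ = exp (- 2 * ?S)")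
proof -
  have Ln_sums: "(\<lambda>j. Ln (1 + q ^ (n + 1 + j))) sums - ?S"
    using assms by (rule Ln_tail_sums_divisor_series)
  have "1 + q ^ (n + 1 + j) \<noteq> 0" for j
    using one_plus_power_nonzero [of q "n + j"] assms by simp
  then have "qpoch_inf (- (q ^ (n + 1))) q = (\<Prod>j. exp (Ln (1 + q ^ (n + 1 + j))))"
    by (simp add: qpoch_inf_def power_add mult.assoc)
  also have "\<dots> = exp (- ?S)"
    using prodinf_exp [OF sums_summable [OF Ln_sums]] sums_unique [OF Ln_sums] by simp
  finally show ?thesis
    by (simp add: exp_of_nat_mult [of 2, symmetric])
qed

lemma sum_divisors_cofactor:
  assumes "0 < m"
  shows "(\<Sum>d\<in>{d. d dvd m \<and> n + 1 \<le> d}. (-1) ^ (m div d) * of_nat d) / of_nat m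
       = (\<Sum>e\<in>{e. 0 < e \<and> e dvd m \<and> real e \<le> real m / real (n + 1)}. (-1) ^ e / (of_nat e :: complex))"
  unfolding sum_divide_distrib
proof (rule sum.reindex_bij_witness [where i = "\<lambda>e. m div e" and j = "\<lambda>d. m div d"])
  fix d
  assume "d \<in> {d. d dvd m \<and> n + 1 \<le> d}"
  then obtain k where m: "m = d * k" and d: "n + 1 \<le> d" by auto
  with assms have "0 < k" by (auto intro: gr0I)
  moreover have "real k * real (n + 1) \<le> real k * real d"
    using d by (intro mult_left_mono) auto
  ultimately show "m div (m div d) = d"
    and "m div d \<in> {e. 0 < e \<and> e dvd m \<and> real e \<le> real m / real (n + 1)}"
    and "(-1) ^ (m div d) / of_nat (m div d) = (-1) ^ (m div d) * of_nat d / (of_nat m :: complex)"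
    using m d by (auto simp: pos_le_divide_eq field_simps)
next
  fix e
  assume "e \<in> {e. 0 < e \<and> e dvd m \<and> real e \<le> real m / real (n + 1)}"
  then obtain k where m: "m = e * k" and e: "0 < e" and le: "real e * real (n + 1) \<le> real m"
    by (auto simp: pos_le_divide_eq)
  then have "e * (n + 1) \<le> e * k"
    by (simp only: of_nat_mult [symmetric] of_nat_le_iff)
  with e have "n + 1 \<le> k"
    using mult_le_cancel1 by blast
  with m e show "m div (m div e) = e" and "m div e \<in> {d. d dvd m \<and> n + 1 \<le> d}"
    by auto
qed

lemma qpoch_inf_tail_sq_exp_cofactor:
  fixes q :: complex
  assumes "norm q < 1"
  shows "(qpoch_inf (- (q ^ (n + 1))) q)\<^sup>2 = exp (- 2 * (\<Sum>s. q ^ Suc s *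
           (\<Sum>d\<in>{d. 0 < d \<and> d dvd Suc s \<and> real d \<le> real (Suc s) / real (n + 1)}.
              (-1) ^ d / of_nat d)))"
proof -
  have "q ^ Suc s / of_nat (Suc s) *
          (\<Sum>d\<in>{d. d dvd Suc s \<and> n + 1 \<le> d}. (-1) ^ (Suc s div d) * of_nat d)
      = q ^ Suc s * ((\<Sum>d\<in>{d. d dvd Suc s \<and> n + 1 \<le> d}. (-1) ^ (Suc s div d) * of_nat d)
          / of_nat (Suc s))" for s
    by (simp only: times_divide_eq_left times_divide_eq_right)
  with qpoch_inf_tail_sq_exp [OF assms, of n] show ?thesis
    by (simp only: sum_divisors_cofactor zero_less_Suc)
qed

lemma suminf_div_qpoch_sq_mult_chi_sq:
  fixes q :: complex
  assumes "norm q < 1" and "summable (\<lambda>n. a n / (qpoch (- q) q n)\<^sup>2)"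
  shows "(\<Sum>n. a n / (qpoch (- q) q n)\<^sup>2) * (chi q)\<^sup>2
       = (\<Sum>n. (qpoch_inf (- (q ^ (n + 1))) q)\<^sup>2 * a n)"
proof -
  have "a n / (qpoch (- q) q n)\<^sup>2 * (chi q)\<^sup>2 = (qpoch_inf (- (q ^ (n + 1))) q)\<^sup>2 * a n" for n
    using qpoch_minus_nonzero [of q n] assms(1)
    by (simp add: chi_eq_qpoch_mult_tail [OF assms(1), of n] power_mult_distrib)
  then show ?thesis
    using suminf_mult2 [OF assms(2), of "(chi q)\<^sup>2"] by simp
qed

lemma f_mult_chi_sq:
  fixes q :: complex
  assumes "norm q < 1"
  shows "f q * (chi q)\<^sup>2 = (\<Sum>n. (qpoch_inf (- (q ^ (n + 1))) q)\<^sup>2 * q ^ n\<^sup>2)"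
  using suminf_div_qpoch_sq_mult_chi_sq [OF assms] summable_f_term assms
  by (simp add: f_def f_term_def [abs_def])

lemma f_inverse_mult_chi_sq:
  fixes q :: complex
  assumes "0 < norm q" and "norm q < 1"
  shows "f (1 / q) * (chi q)\<^sup>2 = (\<Sum>n. (qpoch_inf (- (q ^ (n + 1))) q)\<^sup>2 * q ^ n)"
  using suminf_div_qpoch_sq_mult_chi_sq [OF assms(2)]
    summable_norm_cancel [OF summable_norm_power_div_qpoch_sq [OF assms(2)]] f_inverse_eq assms
  by simp

theorem theorem2:
  shows "(\<forall>q::complex. norm q \<noteq> 1 \<longrightarrow> summable (f_term q))
    \<and> (\<forall>q::complex. 0 < norm q \<and> norm q < 1 \<longrightarrow>
        f q = (\<Sum>n. q ^ (n\<^sup>2) / (qpoch (- q) q n)\<^sup>2)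
      \<and> f (1 / q) = (\<Sum>n. q ^ n / (qpoch (- q) q n)\<^sup>2)
      \<and> f q = 1 / (chi q)\<^sup>2 *
               (\<Sum>n. (qpoch_inf (- (q ^ (n + 1))) q)\<^sup>2 * q ^ (n\<^sup>2))
      \<and> f (1 / q) = 1 / (chi q)\<^sup>2 *
               (\<Sum>n. (qpoch_inf (- (q ^ (n + 1))) q)\<^sup>2 * q ^ n)
      \<and> f q = 1 / (chi q)\<^sup>2 *
               (\<Sum>n. q ^ (n\<^sup>2) * exp (- 2 * (\<Sum>s. 
                   q ^ Suc s / of_nat (Suc s) *
                   (\<Sum>d\<in>{d. d dvd Suc s \<and> n + 1 \<le> d}.
                      (-1) ^ (Suc s div d) * of_nat d))))
      \<and> f q * (chi q)\<^sup>2 =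
               (\<Sum>n. q ^ (n\<^sup>2) * exp (- 2 * (\<Sum>s.
                   q ^ Suc s *
                   (\<Sum>d\<in>{d. 0 < d \<and> d dvd Suc s \<and> real d \<le> real (Suc s) / real (n + 1)}.
                      (-1) ^ d / of_nat d))))
      \<and> f (1 / q) * (chi q)\<^sup>2 =
               (\<Sum>n. q ^ n * exp (- 2 * (\<Sum>s.
                   q ^ Suc s *
                   (\<Sum>d\<in>{d. 0 < d \<and> d dvd Suc s \<and> real d \<le> real (Suc s) / real (n + 1)}.
                      (-1) ^ d / of_nat d)))))"
proof ((intro conjI allI impI; (elim conjE)?), goal_cases)
  case (1 q)
  then show ?case by (rule summable_f_term)
next
  case (2 q)
  show ?case by (simp add: f_def f_term_def)
next
  case (3 q)
  then show ?case by (intro f_inverse_eq) auto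
next
  case (4 q)
  with f_mult_chi_sq chi_nonzero show ?case by (simp add: field_simps)
next
  case (5 q)
  with f_inverse_mult_chi_sq chi_nonzero show ?case by (simp add: field_simps)
next
  case (6 q)
  from f_mult_chi_sq [OF 6(2)] chi_nonzero [OF 6(2)] show ?case
    unfolding qpoch_inf_tail_sq_exp [OF 6(2)] mult.commute [of "exp _"] by (simp add: field_simps)
next
  case (7 q)
  from f_mult_chi_sq [OF 7(2)] show ?case
    unfolding qpoch_inf_tail_sq_exp_cofactor [OF 7(2)] mult.commute [of "exp _"] .
next
  case (8 q)
  from f_inverse_mult_chi_sq [OF 8] show ?case
    unfolding qpoch_inf_tail_sq_exp_cofactor [OF 8(2)] mult.commute [of "exp _"] .
qed

end
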